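(* Let $P$ be a finite poset with height function $h$ and let $D\ge1$ be an integer. Then $$\mathsf{Z}_{P,Dh}(x)=\mathsf{Z}_{P,h}\big|_{q=q^D}\!\left(\frac{(1+(q-1)x)^D-1}{q^D-1}\right),$$ where $\mathsf{Z}_{P,h}|_{q=q^D}$ denotes the polynomial obtained from $\mathsf{Z}_{P,h}$ by replacing $q$ by $q^D$ in its coefficients.
   Context: $q$ is an indeterminate; $[n]_q=(q^n-1)/(q-1)$. A height function on a finite poset $P$ is $h:P\to\mathbb{N}$ with $h(x)<h(y)$ whenever $y$ covers $x$ (so $Dh$ is again one). The $q$-Zeta polynomial $\mathsf{Z}_{P,h}\in\mathbb{Q}(q)[x]$ is the unique polynomial with $\mathsf{Z}_{P,h}([n]_q)=\sum_{e_1\le\cdots\le e_{n-1}\text{ in }P}q^{h(e_1)+\cdots+h(e_{n-1})}$ for all integers $n\ge2$ (such a polynomial exists). *)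

theory Defs
  imports "HOL-Computational_Algebra.Computational_Algebra" "HOL-Computational_Algebra.Field_as_Ring"
begin

type_synonym ratfun = "rat poly fract"

definition qvar :: ratfun where
  "qvar = to_fract [:0, 1:]"

definition qint :: "nat \<Rightarrow> ratfun" where
  "qint n = (qvar ^ n - 1) / (qvar - 1)"

text \<open>Substitution q := q^D in a rational function.\<close>
definition qsubst :: "nat \<Rightarrow> ratfun \<Rightarrow> ratfun" where
  "qsubst D f = (case quot_of_fract f of (a, b) \<Rightarrow>
      Fract (pcompose a (monom 1 D)) (pcompose b (monom 1 D)))"

definition covers :: "'a::order set \<Rightarrow> 'a \<Rightarrow> 'a \<Rightarrow> bool" where
  "covers P x y \<longleftrightarrow> x \<in> P \<and> y \<in> P \<and> x < y \<and> \<not> (\<exists>z\<in>P. x < z \<and> z < y)"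

definition height_function :: "'a::order set \<Rightarrow> ('a \<Rightarrow> nat) \<Rightarrow> bool" where
  "height_function P h \<longleftrightarrow> (\<forall>x y. covers P x y \<longrightarrow> h x < h y)"

definition multichain_sum :: "'a::order set \<Rightarrow> ('a \<Rightarrow> nat) \<Rightarrow> nat \<Rightarrow> ratfun" where
  "multichain_sum P h n =
     (\<Sum>es\<in>{es. length es = n - 1 \<and> set es \<subseteq> P \<and> sorted_wrt (\<le>) es}.
        qvar ^ sum_list (map h es))"

definition qZeta :: "'a::order set \<Rightarrow> ('a \<Rightarrow> nat) \<Rightarrow> ratfun poly" where
  "qZeta P h = (THE Z. \<forall>n\<ge>2. poly Z (qint n) = multichain_sum P h n)"

end

theory Submission
  imports Defs
begin

text \<open>
  Splitting off the first element of a multichain shows that, for n \<ge> 2, the multichain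
  sum is a linear combination of geometric sequences (q^j)^n with j ranging over h(P).
  The recursion can be solved by geometric sequences because h is strictly increasing
  along chains, so the ratios it meets are distinct. As q^n = 1 + (q - 1)[n]_q, such a
  combination is a polynomial in [n]_q, unique since [n]_q takes infinitely many values.
  Substituting q := q^D is a ring endomorphism of Q(q) mapping [n]_q to
  ((1 + (q - 1)[n]_q)^D - 1)/(q^D - 1) and the multichain sums of h to those of D h, so
  uniqueness gives the identity.
\<close>

lemma qvar_power_eq_Fract: "qvar ^ k = Fract (monom 1 k) 1"
  unfolding qvar_def to_fract_def
  by (induction k) (auto simp: One_fract_def monom_Suc)

lemma qvar_power_inject: "qvar ^ a = qvar ^ b \<longleftrightarrow> a = b"
proof
  assume "qvar ^ a = qvar ^ b"
  hence "monom (1::rat) a = monom 1 b" by (simp add: qvar_power_eq_Fract eq_fract)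
  thus "a = b" by (metis coeff_monom one_neq_zero)
qed simp

lemma qvar_neq_0: "qvar \<noteq> 0"
  using qvar_power_inject[of 1 2] by (auto simp: power2_eq_square)

lemma qvar_power_neq_1: "k \<ge> 1 \<Longrightarrow> qvar ^ k \<noteq> 1"
  using qvar_power_inject[of k 0] by simp

lemma qvar_power_eq_poly_qint: "qvar ^ n = poly [:1, qvar - 1:] (qint n)"
  using qvar_power_neq_1[of 1] by (simp add: qint_def)

lemma qint_inject: "qint n = qint m \<Longrightarrow> n = m"
  using qvar_power_eq_poly_qint qvar_power_inject by metis

lemma pcompose_monom_neq_0:
  "p \<noteq> 0 \<Longrightarrow> D \<ge> 1 \<Longrightarrow> pcompose (p::rat poly) (monom 1 D) \<noteq> 0"
  using pcompose_eq_0_iff[of "monom (1::rat) D" p] by (simp add: degree_monom_eq)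

context
  fixes D :: nat
  assumes D_pos: "D \<ge> 1"
begin

lemma qsubst_Fract:
  assumes "b \<noteq> 0"
  shows "qsubst D (Fract a b) = Fract (pcompose a (monom 1 D)) (pcompose b (monom 1 D))"
proof -
  obtain a' b' where q: "quot_of_fract (Fract a b) = (a', b')"
    by (cases "quot_of_fract (Fract a b)")
  have "b' \<noteq> 0" using snd_quot_of_fract_nonzero[of "Fract a b"] q by simp
  have "Fract a' b' = Fract a b" using Fract_quot_of_fract[of "Fract a b"] q by simp
  hence "a' * b = a * b'" using assms \<open>b' \<noteq> 0\<close> by (simp add: eq_fract)
  hence "pcompose a' (monom 1 D) * pcompose b (monom 1 D) =
      pcompose a (monom 1 D) * pcompose b' (monom 1 D)"
    by (metis pcompose_mult)
  thus ?thesis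
    unfolding qsubst_def q
    using pcompose_monom_neq_0[OF \<open>b' \<noteq> 0\<close> D_pos] pcompose_monom_neq_0[OF assms D_pos]
    by (simp add: eq_fract)
qed

lemma qsubst_add: "qsubst D (x + y) = qsubst D x + qsubst D y"
proof -
  obtain a b where x: "x = Fract a b" "b \<noteq> 0" by (cases x) auto
  obtain c d where y: "y = Fract c d" "d \<noteq> 0" by (cases y) auto
  show ?thesis
    using x y pcompose_monom_neq_0[OF x(2) D_pos] pcompose_monom_neq_0[OF y(2) D_pos]
    by (simp add: qsubst_Fract pcompose_add pcompose_mult)
qed

lemma qsubst_mult: "qsubst D (x * y) = qsubst D x * qsubst D y"
proof -
  obtain a b where x: "x = Fract a b" "b \<noteq> 0" by (cases x) auto
  obtain c d where y: "y = Fract c d" "d \<noteq> 0" by (cases y) auto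
  show ?thesis using x y by (simp add: qsubst_Fract pcompose_mult)
qed

lemma qsubst_0: "qsubst D 0 = 0"
  by (simp add: Zero_fract_def qsubst_Fract eq_fract)

lemma qsubst_1: "qsubst D 1 = 1"
  by (simp add: One_fract_def qsubst_Fract pcompose_1)

lemma qsubst_diff: "qsubst D (x - y) = qsubst D x - qsubst D y"
  using qsubst_add[of "x - y" y] by (simp add: algebra_simps)

lemma qsubst_sum: "qsubst D (sum f A) = (\<Sum>a\<in>A. qsubst D (f a))"
  by (induction A rule: infinite_finite_induct) (auto simp: qsubst_0 qsubst_add)

lemma qsubst_qvar_power: "qsubst D (qvar ^ k) = qvar ^ (D * k)"
proof -
  have "pcompose (monom (1::rat) k) p = p ^ k" for p
    by (induction k) (auto simp: monom_Suc pcompose_pCons pcompose_1)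
  thus ?thesis by (simp add: qvar_power_eq_Fract qsubst_Fract monom_power pcompose_1)
qed

lemma poly_map_poly_qsubst: "poly (map_poly (qsubst D) p) (qsubst D x) = qsubst D (poly p x)"
  by (induction p) (auto simp: map_poly_pCons qsubst_0 qsubst_add qsubst_mult)

lemma qsubst_qint:
  "qsubst D (qint n) = poly (smult (inverse (qvar ^ D - 1)) ([:1, qvar - 1:] ^ D - 1)) (qint n)"
proof -
  have "qsubst D (qint n) * (qvar ^ D - 1) = qsubst D (qint n * (qvar ^ 1 - 1))"
    by (simp only: qsubst_mult qsubst_diff qsubst_1 qsubst_qvar_power mult_1_right)
  also have "qint n * (qvar ^ 1 - 1) = qvar ^ n - 1"
    using qvar_power_neq_1[of 1] by (simp add: qint_def)
  also have "qsubst D (qvar ^ n - 1) = (qvar ^ n) ^ D - 1"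
    by (simp only: qsubst_diff qsubst_1 qsubst_qvar_power mult.commute[of D n] power_mult)
  also have "qvar ^ n = poly [:1, qvar - 1:] (qint n)"
    by (rule qvar_power_eq_poly_qint)
  finally have "qsubst D (qint n) * (qvar ^ D - 1) = poly [:1, qvar - 1:] (qint n) ^ D - 1" .
  moreover have "qvar ^ D - 1 \<noteq> 0"
    using qvar_power_neq_1[OF D_pos] by simp
  ultimately show ?thesis
    unfolding poly_smult poly_diff poly_power poly_1
    by (metis divide_inverse_commute nonzero_mult_div_cancel_right)
qed

lemma qsubst_multichain_sum:
  "qsubst D (multichain_sum P h n) = multichain_sum P (\<lambda>x. D * h x) n"
  unfolding multichain_sum_def qsubst_sum qsubst_qvar_power
  by (simp add: sum_list_const_mult)

end

definition geom_comb :: "'a::comm_ring_1 set \<Rightarrow> (nat \<Rightarrow> 'a) \<Rightarrow> bool" where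
  "geom_comb R f \<longleftrightarrow> (\<exists>c. \<forall>L. f L = (\<Sum>r\<in>R. c r * r ^ L))"

lemma geom_comb_subset:
  assumes "geom_comb R f" "R \<subseteq> R'" "finite R'"
  shows "geom_comb R' f"
proof -
  obtain c where c: "\<And>L. f L = (\<Sum>r\<in>R. c r * r ^ L)" using assms(1) unfolding geom_comb_def by blast
  have "f L = (\<Sum>r\<in>R'. (if r \<in> R then c r else 0) * r ^ L)" for L
    unfolding c using assms(2,3) by (subst sum.mono_neutral_cong_right[of R' R]) auto
  thus ?thesis unfolding geom_comb_def by metis
qed

lemma geom_comb_add:
  assumes "geom_comb R f" "geom_comb R g"
  shows "geom_comb R (\<lambda>L. f L + g L)"
proof -
  obtain c d where "\<And>L. f L = (\<Sum>r\<in>R. c r * r ^ L)" "\<And>L. g L = (\<Sum>r\<in>R. d r * r ^ L)"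
    using assms unfolding geom_comb_def by blast
  hence "f L + g L = (\<Sum>r\<in>R. (c r + d r) * r ^ L)" for L
    by (simp add: sum.distrib distrib_right)
  thus ?thesis unfolding geom_comb_def by metis
qed

lemma geom_comb_cmult:
  assumes "geom_comb R f"
  shows "geom_comb R (\<lambda>L. k * f L)"
proof -
  obtain c where "\<And>L. f L = (\<Sum>r\<in>R. c r * r ^ L)" using assms unfolding geom_comb_def by blast
  hence "k * f L = (\<Sum>r\<in>R. (k * c r) * r ^ L)" for L
    by (simp add: sum_distrib_left mult.assoc)
  thus ?thesis unfolding geom_comb_def by metis
qed

lemma geom_comb_sum:
  "(\<And>x. x \<in> X \<Longrightarrow> geom_comb R (f x)) \<Longrightarrow> geom_comb R (\<lambda>L. \<Sum>x\<in>X. f x L)"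
proof (induction X rule: infinite_finite_induct)
  case (insert x X)
  thus ?case by (simp add: geom_comb_add)
qed (auto simp: geom_comb_def intro: exI[of _ "\<lambda>_. 0"])

lemma geom_comb_recurrence:
  fixes a :: "'a::field"
  assumes "finite R" "a \<notin> R" "geom_comb R g" "\<And>L. G (Suc L) = a * G L + g L"
  shows "geom_comb (insert a R) G"
proof -
  obtain c where c: "\<And>L. g L = (\<Sum>r\<in>R. c r * r ^ L)" using assms(3) unfolding geom_comb_def by blast
  define b where "b r = c r / (r - a)" for r
  define C where "C = G 0 - (\<Sum>r\<in>R. b r)"
  have b: "a * b r + c r = b r * r" if "r \<in> R" for r
    using that assms(2) unfolding b_def by (cases "r = a") (auto simp: field_simps)
  have closed_form: "G L = C * a ^ L + (\<Sum>r\<in>R. b r * r ^ L)" for L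
  proof (induction L)
    case 0
    thus ?case by (simp add: C_def)
  next
    case (Suc L)
    have "G (Suc L) = C * a ^ Suc L + (\<Sum>r\<in>R. (a * b r + c r) * r ^ L)"
      using assms(4) Suc c by (simp add: sum_distrib_left sum.distrib algebra_simps)
    also have "(\<Sum>r\<in>R. (a * b r + c r) * r ^ L) = (\<Sum>r\<in>R. b r * r ^ Suc L)"
      by (rule sum.cong) (auto simp: b)
    finally show ?case .
  qed
  have "G L = (\<Sum>r\<in>insert a R. (if r = a then C else b r) * r ^ L)" for L
    unfolding closed_form using assms(1,2) by (auto intro: sum.cong)
  thus ?thesis unfolding geom_comb_def by metis
qed

lemma geom_comb_qvar_powers_interpolation:
  assumes "geom_comb R g" "R \<subseteq> range (power qvar)"
  shows "\<exists>Z. \<forall>n\<ge>2. poly Z (qint n) = g (n - 2)"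
proof -
  obtain c where c: "\<And>L. g L = (\<Sum>r\<in>R. c r * r ^ L)" using assms(1) unfolding geom_comb_def by blast
  obtain e where e: "\<And>r. r \<in> R \<Longrightarrow> r = qvar ^ e r"
    using assms(2) by (metis f_inv_into_f subsetD)
  define Z where "Z = (\<Sum>r\<in>R. smult (c r / r ^ 2) ([:1, qvar - 1:] ^ e r))"
  have "poly Z (qint n) = g (n - 2)" if "n \<ge> 2" for n
    unfolding Z_def poly_sum c
  proof (rule sum.cong[OF refl])
    fix r assume "r \<in> R"
    have "poly [:1, qvar - 1:] (qint n) ^ e r = (qvar ^ e r) ^ n"
      by (metis qvar_power_eq_poly_qint power_mult mult.commute)
    also have "\<dots> = r ^ n" using e[OF \<open>r \<in> R\<close>] by metis
    also have "\<dots> = r ^ 2 * r ^ (n - 2)"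
      using \<open>n \<ge> 2\<close> by (metis le_add_diff_inverse power_add)
    finally have "poly [:1, qvar - 1:] (qint n) ^ e r = r ^ 2 * r ^ (n - 2)" .
    moreover have "r \<noteq> 0" using e[OF \<open>r \<in> R\<close>] qvar_neq_0 by (metis power_not_zero)
    ultimately show "poly (smult (c r / r ^ 2) ([:1, qvar - 1:] ^ e r)) (qint n) = c r * r ^ (n - 2)"
      by (simp add: poly_power)
  qed
  thus ?thesis by blast
qed

definition multichains :: "'a::order set \<Rightarrow> nat \<Rightarrow> 'a list set" where
  "multichains P L = {es. length es = L \<and> set es \<subseteq> P \<and> sorted_wrt (\<le>) es}"

lemma finite_multichains: "finite P \<Longrightarrow> finite (multichains P L)"
  by (rule finite_subset[OF _ finite_lists_length_eq[of P L]]) (auto simp: multichains_def)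

lemma multichains_Suc: "multichains P (Suc L) = (\<Union>x\<in>P. (#) x ` multichains {y\<in>P. x \<le> y} L)"
proof (intro equalityI subsetI)
  fix es assume "es \<in> multichains P (Suc L)"
  then obtain x xs where "es = x # xs" "x \<in> P" "xs \<in> multichains {y\<in>P. x \<le> y} L"
    by (fastforce simp: multichains_def length_Suc_conv)
  thus "es \<in> (\<Union>x\<in>P. (#) x ` multichains {y\<in>P. x \<le> y} L)" by blast
qed (auto simp: multichains_def)

lemma multichain_sum_Suc:
  "multichain_sum P h (Suc L) = (\<Sum>es\<in>multichains P L. qvar ^ sum_list (map h es))"
  by (simp add: multichain_sum_def multichains_def)

lemma multichain_sum_Suc_Suc:
  assumes "finite P"
  shows "multichain_sum P h (Suc (Suc L)) =
    (\<Sum>x\<in>P. qvar ^ h x * multichain_sum {y\<in>P. x \<le> y} h (Suc L))"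
proof -
  have "multichain_sum P h (Suc (Suc L)) =
      (\<Sum>x\<in>P. \<Sum>es\<in>(#) x ` multichains {y\<in>P. x \<le> y} L. qvar ^ sum_list (map h es))"
    unfolding multichain_sum_Suc multichains_Suc
    by (rule sum.UNION_disjoint) (auto simp: assms finite_multichains)
  also have "\<dots> = (\<Sum>x\<in>P. qvar ^ h x * multichain_sum {y\<in>P. x \<le> y} h (Suc L))"
    by (simp add: sum.reindex multichain_sum_Suc power_add sum_distrib_left)
  finally show ?thesis .
qed

lemma multichain_sum_upset_Suc_Suc:
  assumes "finite P" "x \<in> P"
  shows "multichain_sum {y\<in>P. x \<le> y} h (Suc (Suc L)) =
    qvar ^ h x * multichain_sum {y\<in>P. x \<le> y} h (Suc L) + multichain_sum {y\<in>P. x < y} h (Suc (Suc L))"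
proof -
  define U where "U = {y\<in>P. x \<le> y}"
  define V where "V = {y\<in>P. x < y}"
  have "U = insert x V" "x \<notin> V" "finite V" using assms by (auto simp: U_def V_def)
  have "multichain_sum U h (Suc (Suc L)) =
      (\<Sum>y\<in>insert x V. qvar ^ h y * multichain_sum {z\<in>U. y \<le> z} h (Suc L))"
    using multichain_sum_Suc_Suc[of U h L] \<open>U = insert x V\<close> \<open>finite V\<close> by simp
  also have "\<dots> = qvar ^ h x * multichain_sum U h (Suc L) +
      (\<Sum>y\<in>V. qvar ^ h y * multichain_sum {z\<in>V. y \<le> z} h (Suc L))"
  proof -
    have "{z\<in>U. x \<le> z} = U" by (auto simp: U_def)
    moreover have "{z\<in>U. y \<le> z} = {z\<in>V. y \<le> z}" if "y \<in> V" for y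
      using that by (auto simp: U_def V_def intro: order.strict_trans2)
    ultimately show ?thesis using \<open>x \<notin> V\<close> \<open>finite V\<close> by simp
  qed
  also have "(\<Sum>y\<in>V. qvar ^ h y * multichain_sum {z\<in>V. y \<le> z} h (Suc L)) =
      multichain_sum V h (Suc (Suc L))"
    using multichain_sum_Suc_Suc[OF \<open>finite V\<close>] by simp
  finally show ?thesis by (simp only: U_def V_def)
qed

lemma height_function_strict_mono_on:
  assumes "finite P" "height_function P h"
  shows "strict_mono_on P h"
proof (rule strict_mono_onI)
  show "h x < h y" if "x \<in> P" "y \<in> P" "x < y" for x y
    using that
  proof (induction "card {z\<in>P. x < z \<and> z < y}" arbitrary: x y rule: less_induct)
    case less
    show ?case
    proof (cases "\<exists>z\<in>P. x < z \<and> z < y")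
      case False
      hence "covers P x y" using less.prems by (simp add: covers_def)
      thus ?thesis using assms(2) by (simp add: height_function_def)
    next
      case True
      then obtain z where z: "z \<in> P" "x < z" "z < y" by blast
      have fin: "finite {w\<in>P. x < w \<and> w < y}" using assms(1) by simp
      have "{w\<in>P. x < w \<and> w < z} \<subset> {w\<in>P. x < w \<and> w < y}"
        "{w\<in>P. z < w \<and> w < y} \<subset> {w\<in>P. x < w \<and> w < y}"
        using z by (auto dest: order.strict_trans)
      hence "h x < h z" "h z < h y"
        using less.hyps[OF psubset_card_mono[OF fin]] less.prems z by blast+
      thus ?thesis by simp
    qed
  qed
qed

text \<open>The sequence starts at multichains of length 1; the empty multichain (sum 1) does
  not fit the geometric form.\<close>

lemma geom_comb_multichain_sum:
  assumes "finite P" "strict_mono_on P h"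
  shows "geom_comb ((\<lambda>x. qvar ^ h x) ` P) (\<lambda>L. multichain_sum P h (Suc (Suc L)))"
  using assms
proof (induction "card P" arbitrary: P rule: less_induct)
  case less
  have "geom_comb ((\<lambda>x. qvar ^ h x) ` P) (\<lambda>L. multichain_sum {y\<in>P. x \<le> y} h (Suc L))"
    if "x \<in> P" for x
  proof -
    define V where "V = {y\<in>P. x < y}"
    have "V \<subset> P" "finite V" using that less.prems(1) by (auto simp: V_def)
    hence "geom_comb ((\<lambda>x. qvar ^ h x) ` V) (\<lambda>L. multichain_sum V h (Suc (Suc L)))"
      using less.prems by (intro less.hyps) (auto intro: psubset_card_mono monotone_on_subset)
    moreover have "qvar ^ h x \<notin> (\<lambda>x. qvar ^ h x) ` V"
      using less.prems(2) that by (force simp: V_def qvar_power_inject dest: strict_mono_onD)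
    ultimately have "geom_comb (insert (qvar ^ h x) ((\<lambda>x. qvar ^ h x) ` V))
        (\<lambda>L. multichain_sum {y\<in>P. x \<le> y} h (Suc L))"
      using less.prems(1) that
      by (intro geom_comb_recurrence) (auto simp: V_def multichain_sum_upset_Suc_Suc)
    thus ?thesis
      by (rule geom_comb_subset) (use that less.prems(1) in \<open>auto simp: V_def\<close>)
  qed
  thus ?case
    unfolding multichain_sum_Suc_Suc[OF less.prems(1)]
    by (intro geom_comb_sum geom_comb_cmult)
qed

lemma poly_eq_if_eq_on_qints:
  assumes "\<And>n. n \<ge> 2 \<Longrightarrow> poly Z1 (qint n) = poly Z2 (qint n)"
  shows "Z1 = Z2"
proof (rule ccontr)
  assume "Z1 \<noteq> Z2"
  hence "finite {x. poly (Z1 - Z2) x = 0}" by (intro poly_roots_finite) simp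
  moreover have "qint ` {2..} \<subseteq> {x. poly (Z1 - Z2) x = 0}" using assms by auto
  ultimately have "finite (qint ` {2..})" by (rule finite_subset[rotated])
  moreover have "inj_on qint {2..}" by (auto intro: inj_onI qint_inject)
  ultimately show False using infinite_Ici[of "2::nat"] finite_imageD by blast
qed

lemma qZeta_eqI:
  assumes "\<And>n. n \<ge> 2 \<Longrightarrow> poly Z (qint n) = multichain_sum P h n"
  shows "qZeta P h = Z"
  unfolding qZeta_def
  by (rule the_equality) (use assms poly_eq_if_eq_on_qints in auto)

lemma poly_qZeta_qint:
  assumes "finite P" "height_function P h" "n \<ge> 2"
  shows "poly (qZeta P h) (qint n) = multichain_sum P h n"
proof -
  have "geom_comb ((\<lambda>x. qvar ^ h x) ` P) (\<lambda>L. multichain_sum P h (Suc (Suc L)))"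
    using assms(1,2) by (intro geom_comb_multichain_sum height_function_strict_mono_on)
  then obtain Z where "\<forall>n\<ge>2. poly Z (qint n) = multichain_sum P h (Suc (Suc (n - 2)))"
    using geom_comb_qvar_powers_interpolation by blast
  hence Z: "poly Z (qint n) = multichain_sum P h n" if "n \<ge> 2" for n
    using that by (simp add: Suc_diff_Suc numeral_2_eq_2)
  thus ?thesis using qZeta_eqI[OF Z] assms(3) by simp
qed

theorem mainTheorem17:
  fixes P :: "'a::order set" and h :: "'a \<Rightarrow> nat" and D :: nat
  assumes "finite P" and "height_function P h" and "D \<ge> 1"
  shows "qZeta P (\<lambda>x. D * h x) =
    pcompose (map_poly (qsubst D) (qZeta P h))
      (smult (inverse (qvar ^ D - 1)) ([:1, qvar - 1:] ^ D - 1))"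
proof (rule qZeta_eqI)
  let ?qint_D = "smult (inverse (qvar ^ D - 1)) ([:1, qvar - 1:] ^ D - 1)"
  fix n :: nat assume "n \<ge> 2"
  have "poly (pcompose (map_poly (qsubst D) (qZeta P h)) ?qint_D) (qint n) =
      poly (map_poly (qsubst D) (qZeta P h)) (qsubst D (qint n))"
    by (simp add: poly_pcompose qsubst_qint[OF assms(3)])
  also have "\<dots> = qsubst D (poly (qZeta P h) (qint n))"
    by (rule poly_map_poly_qsubst[OF assms(3)])
  also have "\<dots> = qsubst D (multichain_sum P h n)"
    using poly_qZeta_qint[OF assms(1,2) \<open>n \<ge> 2\<close>] by simp
  also have "\<dots> = multichain_sum P (\<lambda>x. D * h x) n"
    by (rule qsubst_multichain_sum[OF assms(3)])
  finally show "poly (pcompose (map_poly (qsubst D) (qZeta P h)) ?qint_D) (qint n) =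
      multichain_sum P (\<lambda>x. D * h x) n" .
qed

end
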